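(* Let $L$ be a multisorted algebra in the positive existential signature satisfying axioms (0), (1), (2), (3), (4), (8). Then there is a set $W$ and an almost morphism $\varphi\colon L\to A(W)$ into the positive existential algebra of $W$ which is injective on each sort.
   Context: The Boolean prime ideal theorem (equivalently, compactness) is assumed. Signature. There is a sort $n$ for each $n\ge0$. For every function $\alpha\colon\{1,\dots,n\}\to\{1,\dots,k\}$ there is a unary function symbol ("substitution") $\alpha\colon n\to k$ (argument of sort $n$, value of sort $k$). Each sort has $0,1,\vee,\wedge$; for each $n$ there is $\exists\colon n+1\to n$ (positive existential signature). For $\alpha\colon k\to n$, $\beta\colon n\to m$, $\beta\circ\alpha$ is the substitution symbol of the composite function; $\mathrm{id}$ is the identity substitution. The associated cylindrification of $\exists\colon n+1\to n$ is $c\colon n\to n+1$, $c(i)=i$. For a set $W$: $\alpha^{\mathrm{tuple}}(x_1,\dots,x_k)=(x_{\alpha(1)},\dots,x_{\alpha(n)})$, $\alpha^{\mathrm{relation}}(r)=\{\bar x\in W^k:\alpha^{\mathrm{tuple}}(\bar x)\in r\}$. The positive existential algebra $A(W)$ interprets sort $n$ as $\mathcal P(W^n)$, $\alpha$ as $\alpha^{\mathrm{relation}}$, $0,1,\vee,\wedge$ as $\emptyset,W^n,\cup,\cap$, and $\exists(r)=\{\bar x:\exists y\,(\bar x,y)\in r\}$. An almost morphism $\varphi\colon L\to A(W)$ is a sort-preserving family of maps commuting with all substitutions and with $0,1,\vee,\wedge$, and satisfying $\exists(\varphi(r))\subseteq\varphi(\exists(r))$. Partitioning cylindrifications: for $k_1,\dots,k_m$,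 $n=\sum k_j$, the substitutions $c_i\colon k_i\to n$, $c_i(l)=l+\sum_{j<i}k_j$. $x\le y$ (also $y\ge x$) means $x=x\wedge y$. Axioms: (0) For partitioning cylindrifications $c_1,\dots,c_m$ and $r_i,s_i$ of sort $k_i$: if $\bigvee_i c_i(s_i)\ge\bigwedge_i c_i(r_i)$ then $s_i\ge r_i$ for some $i$ (including $m=0$: $0\ge1$ fails in sort $0$). (1) Each sort is a bounded distributive lattice. (2) Substitutions preserve $0,1,\vee,\wedge$. (3) $(\beta\circ\alpha)(r)=\beta(\alpha(r))$. (4) $\mathrm{id}(r)=r$. (8) $r\le c(\exists(r))$. *)

theory Defs
  imports Main "HOL-Library.FuncSet"
begin

text \<open>A substitution symbol for a function alpha from {1..n} to {1..k} is
  sb L n k alpha (from sort n to sort k), where alpha ranges over the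
  extensional functions {1..n} \<rightarrow>E {1..k} (one per function).
  ex L n is the existential quantifier from sort n+1 to sort n.\<close>

record 'a pe_alg =
  car :: "nat \<Rightarrow> 'a set"
  zer :: "nat \<Rightarrow> 'a"
  one :: "nat \<Rightarrow> 'a"
  jn  :: "nat \<Rightarrow> 'a \<Rightarrow> 'a \<Rightarrow> 'a"
  mt  :: "nat \<Rightarrow> 'a \<Rightarrow> 'a \<Rightarrow> 'a"
  ex  :: "nat \<Rightarrow> 'a \<Rightarrow> 'a"
  sb  :: "nat \<Rightarrow> nat \<Rightarrow> (nat \<Rightarrow> nat) \<Rightarrow> 'a \<Rightarrow> 'a"

definition substs :: "nat \<Rightarrow> nat \<Rightarrow> (nat \<Rightarrow> nat) set" where
  "substs n k = ({1..n} \<rightarrow>\<^sub>E {1..k})"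

definition scomp :: "nat \<Rightarrow> (nat \<Rightarrow> nat) \<Rightarrow> (nat \<Rightarrow> nat) \<Rightarrow> (nat \<Rightarrow> nat)" where
  "scomp k beta alpha = (\<lambda>i\<in>{1..k}. beta (alpha i))"

definition sid :: "nat \<Rightarrow> (nat \<Rightarrow> nat)" where
  "sid n = (\<lambda>i\<in>{1..n}. i)"

text \<open>The cylindrification c : n -> n+1, c(i) = i.\<close>
definition cyl :: "nat \<Rightarrow> (nat \<Rightarrow> nat)" where
  "cyl n = (\<lambda>i\<in>{1..n}. i)"

text \<open>Partitioning cylindrification c_i : k_i -> n for the family k_0,...,k_(m-1)
  (indexed from 0): c_i(l) = l + sum_{j<i} k_j.\<close>
definition pcyl :: "(nat \<Rightarrow> nat) \<Rightarrow> nat \<Rightarrow> (nat \<Rightarrow> nat)" where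
  "pcyl ks i = (\<lambda>l\<in>{1..ks i}. l + (\<Sum>j<i. ks j))"

definition le :: "('a, 'b) pe_alg_scheme \<Rightarrow> nat \<Rightarrow> 'a \<Rightarrow> 'a \<Rightarrow> bool" where
  "le L n x y \<longleftrightarrow> x = mt L n x y"

fun joins :: "('a, 'b) pe_alg_scheme \<Rightarrow> nat \<Rightarrow> (nat \<Rightarrow> 'a) \<Rightarrow> nat \<Rightarrow> 'a" where
  "joins L n f 0 = zer L n"
| "joins L n f (Suc m) = jn L n (joins L n f m) (f m)"

fun meets :: "('a, 'b) pe_alg_scheme \<Rightarrow> nat \<Rightarrow> (nat \<Rightarrow> 'a) \<Rightarrow> nat \<Rightarrow> 'a" where
  "meets L n f 0 = one L n"
| "meets L n f (Suc m) = mt L n (meets L n f m) (f m)"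

definition pe_algebra :: "('a, 'b) pe_alg_scheme \<Rightarrow> bool" where
  "pe_algebra L \<longleftrightarrow>
     (\<forall>n. zer L n \<in> car L n \<and> one L n \<in> car L n) \<and>
     (\<forall>n x y. x \<in> car L n \<longrightarrow> y \<in> car L n \<longrightarrow> jn L n x y \<in> car L n \<and> mt L n x y \<in> car L n) \<and>
     (\<forall>n x. x \<in> car L (Suc n) \<longrightarrow> ex L n x \<in> car L n) \<and>
     (\<forall>n k \<alpha> x. \<alpha> \<in> substs n k \<longrightarrow> x \<in> car L n \<longrightarrow> sb L n k \<alpha> x \<in> car L k)"

definition ax0 :: "('a, 'b) pe_alg_scheme \<Rightarrow> bool" where
  "ax0 L \<longleftrightarrow>
    (\<forall>(m::nat) (ks::nat \<Rightarrow> nat) (r::nat \<Rightarrow> 'a) (s::nat \<Rightarrow> 'a).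
      (\<forall>i<m. r i \<in> car L (ks i) \<and> s i \<in> car L (ks i)) \<longrightarrow>
      le L (\<Sum>j<m. ks j)
         (meets L (\<Sum>j<m. ks j) (\<lambda>i. sb L (ks i) (\<Sum>j<m. ks j) (pcyl ks i) (r i)) m)
         (joins L (\<Sum>j<m. ks j) (\<lambda>i. sb L (ks i) (\<Sum>j<m. ks j) (pcyl ks i) (s i)) m)
      \<longrightarrow> (\<exists>i<m. le L (ks i) (r i) (s i)))"

definition ax1 :: "('a, 'b) pe_alg_scheme \<Rightarrow> bool" where
  "ax1 L \<longleftrightarrow> (\<forall>n. \<forall>x\<in>car L n. \<forall>y\<in>car L n. \<forall>z\<in>car L n.
      jn L n x (jn L n y z) = jn L n (jn L n x y) z \<and>
      mt L n x (mt L n y z) = mt L n (mt L n x y) z \<and>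
      jn L n x y = jn L n y x \<and>
      mt L n x y = mt L n y x \<and>
      jn L n x (mt L n x y) = x \<and>
      mt L n x (jn L n x y) = x \<and>
      mt L n x (jn L n y z) = jn L n (mt L n x y) (mt L n x z) \<and>
      jn L n x (zer L n) = x \<and>
      mt L n x (one L n) = x)"

definition ax2 :: "('a, 'b) pe_alg_scheme \<Rightarrow> bool" where
  "ax2 L \<longleftrightarrow> (\<forall>n k \<alpha>. \<alpha> \<in> substs n k \<longrightarrow>
      sb L n k \<alpha> (zer L n) = zer L k \<and>
      sb L n k \<alpha> (one L n) = one L k \<and>
      (\<forall>x\<in>car L n. \<forall>y\<in>car L n.
         sb L n k \<alpha> (jn L n x y) = jn L k (sb L n k \<alpha> x) (sb L n k \<alpha> y) \<and>
         sb L n k \<alpha> (mt L n x y) = mt L k (sb L n k \<alpha> x) (sb L n k \<alpha> y)))"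

definition ax3 :: "('a, 'b) pe_alg_scheme \<Rightarrow> bool" where
  "ax3 L \<longleftrightarrow> (\<forall>k n m \<alpha> \<beta>. \<alpha> \<in> substs k n \<longrightarrow> \<beta> \<in> substs n m \<longrightarrow>
      (\<forall>r\<in>car L k. sb L k m (scomp k \<beta> \<alpha>) r = sb L n m \<beta> (sb L k n \<alpha> r)))"

definition ax4 :: "('a, 'b) pe_alg_scheme \<Rightarrow> bool" where
  "ax4 L \<longleftrightarrow> (\<forall>n. \<forall>r\<in>car L n. sb L n n (sid n) r = r)"

definition ax8 :: "('a, 'b) pe_alg_scheme \<Rightarrow> bool" where
  "ax8 L \<longleftrightarrow> (\<forall>n. \<forall>r\<in>car L (Suc n). le L (Suc n) r (sb L n (Suc n) (cyl n) (ex L n r)))"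

text \<open>W^n is represented by lists of length n over W; the i-th coordinate
  (1-based) of xs is xs ! (i - 1).\<close>
definition tuples :: "'w set \<Rightarrow> nat \<Rightarrow> 'w list set" where
  "tuples W n = {xs. length xs = n \<and> set xs \<subseteq> W}"

definition subst_tuple :: "nat \<Rightarrow> (nat \<Rightarrow> nat) \<Rightarrow> 'w list \<Rightarrow> 'w list" where
  "subst_tuple n \<alpha> xs = map (\<lambda>i. xs ! (\<alpha> i - 1)) [1..<Suc n]"

definition subst_rel :: "'w set \<Rightarrow> nat \<Rightarrow> nat \<Rightarrow> (nat \<Rightarrow> nat) \<Rightarrow> 'w list set \<Rightarrow> 'w list set" where
  "subst_rel W n k \<alpha> R = {xs \<in> tuples W k. subst_tuple n \<alpha> xs \<in> R}"

definition ex_rel :: "'w set \<Rightarrow> nat \<Rightarrow> 'w list set \<Rightarrow> 'w list set" where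
  "ex_rel W n R = {xs \<in> tuples W n. \<exists>y\<in>W. xs @ [y] \<in> R}"

definition almost_morphism :: "('a, 'b) pe_alg_scheme \<Rightarrow> 'w set \<Rightarrow> (nat \<Rightarrow> 'a \<Rightarrow> 'w list set) \<Rightarrow> bool" where
  "almost_morphism L W \<phi> \<longleftrightarrow>
     (\<forall>n. \<forall>r\<in>car L n. \<phi> n r \<subseteq> tuples W n) \<and>
     (\<forall>n k \<alpha>. \<alpha> \<in> substs n k \<longrightarrow> (\<forall>r\<in>car L n. \<phi> k (sb L n k \<alpha> r) = subst_rel W n k \<alpha> (\<phi> n r))) \<and>
     (\<forall>n. \<phi> n (zer L n) = {} \<and> \<phi> n (one L n) = tuples W n) \<and>
     (\<forall>n. \<forall>x\<in>car L n. \<forall>y\<in>car L n.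
        \<phi> n (jn L n x y) = \<phi> n x \<union> \<phi> n y \<and> \<phi> n (mt L n x y) = \<phi> n x \<inter> \<phi> n y) \<and>
     (\<forall>n. \<forall>r\<in>car L (Suc n). ex_rel W n (\<phi> (Suc n) r) \<subseteq> \<phi> n (ex L n r))"

end

theory Submission
  imports Defs
begin

(*
  A Henkin-style completeness argument. For every gap r \<not>\<le> s in sort n, a block of n fresh
  witnesses is adjoined at which r is asserted and s denied. An atom is an element r of sort n
  applied to an n-tuple x of witnesses; a sequent A \<turnstile> B of atoms is derivable when, after the
  finitely many witnesses involved are renamed to the variables 1, ..., k, the meet of A lies
  below the join of B in sort k. Weakening is monotonicity, cut is distributivity, and axiom (0)
  says exactly that the assertions and denials made at the gaps are jointly consistent.
  Lindenbaum's lemma extends them to a complete consistent theory X. Sending r to the set of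
  witness tuples x with r(x) \<in> X preserves 0, 1, joins, meets and substitutions (axioms (1)-(3)),
  satisfies \<exists>\<phi>(r) \<subseteq> \<phi>(\<exists>r) by axiom (8), and is injective because every gap is
  separated by its own witness block.
*)

text \<open>A theory is a set of signed formulas: \<open>Inl t\<close> asserts \<open>t\<close>, \<open>Inr t\<close> denies it.\<close>

definition sequent_consistent :: "('t list \<Rightarrow> 't list \<Rightarrow> bool) \<Rightarrow> ('t + 't) set \<Rightarrow> bool" where
  "sequent_consistent prov X \<longleftrightarrow>
     (\<forall>A B. set A \<subseteq> {t. Inl t \<in> X} \<longrightarrow> set B \<subseteq> {t. Inr t \<in> X} \<longrightarrow> \<not> prov A B)"

lemma sequent_consistent_Union_chain:
  assumes "C \<noteq> {}" and "subset.chain F C" and "\<And>Y. Y \<in> C \<Longrightarrow> sequent_consistent prov Y"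
  shows "sequent_consistent prov (\<Union>C)"
  unfolding sequent_consistent_def
proof (intro allI impI)
  fix A B assume "set A \<subseteq> {t. Inl t \<in> \<Union>C}" and "set B \<subseteq> {t. Inr t \<in> \<Union>C}"
  hence "Inl ` set A \<union> Inr ` set B \<subseteq> \<Union>C" by auto
  moreover have "finite (Inl ` set A \<union> Inr ` set B)" by simp
  ultimately obtain Y where Y: "Y \<in> C" and "Inl ` set A \<union> Inr ` set B \<subseteq> Y"
    using assms(1,2) by (metis finite_subset_Union_chain)
  hence "set A \<subseteq> {t. Inl t \<in> Y}" and "set B \<subseteq> {t. Inr t \<in> Y}" by auto
  with assms(3)[OF Y] show "\<not> prov A B" unfolding sequent_consistent_def by blast
qed

locale cut_calculus =
  fixes S :: "'t set" and prov :: "'t list \<Rightarrow> 't list \<Rightarrow> bool"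
  assumes weaken: "\<lbrakk>prov A B; set A \<subseteq> set A'; set B \<subseteq> set B'; set A' \<subseteq> S; set B' \<subseteq> S\<rbrakk> \<Longrightarrow> prov A' B'"
    and cut: "\<lbrakk>set A \<subseteq> S; set B \<subseteq> S; t \<in> S; prov (t # A) B; prov A (t # B)\<rbrakk> \<Longrightarrow> prov A B"
begin

lemma sequent_consistent_insert:
  assumes XS: "X \<subseteq> Inl ` S \<union> Inr ` S" and cons: "sequent_consistent prov X" and t: "t \<in> S"
  shows "sequent_consistent prov (insert (Inl t) X) \<or> sequent_consistent prov (insert (Inr t) X)"
proof (rule ccontr)
  assume "\<not> ?thesis"
  then obtain A1 B1 A2 B2 where
      A1: "set A1 \<subseteq> {s. Inl s \<in> insert (Inl t) X}" and B1: "set B1 \<subseteq> {s. Inr s \<in> X}" and p1: "prov A1 B1"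
    and A2: "set A2 \<subseteq> {s. Inl s \<in> X}" and B2: "set B2 \<subseteq> {s. Inr s \<in> insert (Inr t) X}" and p2: "prov A2 B2"
    unfolding sequent_consistent_def by (simp only: de_Morgan_disj not_all not_imp not_not) blast
  define A where "A = filter (\<lambda>a. Inl a \<in> X) A1 @ A2"
  define B where "B = B1 @ filter (\<lambda>b. Inr b \<in> X) B2"
  have AX: "set A \<subseteq> {s. Inl s \<in> X}" and BX: "set B \<subseteq> {s. Inr s \<in> X}"
    using A2 B1 by (auto simp: A_def B_def)
  hence AS: "set A \<subseteq> S" and BS: "set B \<subseteq> S" using XS by auto
  have "prov (t # A) B" by (rule weaken[OF p1]) (use A1 B1 AS BS t in \<open>auto simp: A_def B_def\<close>)
  moreover have "prov A (t # B)" by (rule weaken[OF p2]) (use A2 B2 AS BS t in \<open>auto simp: A_def B_def\<close>)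
  ultimately have "prov A B" using cut AS BS t by blast
  thus False using cons AX BX unfolding sequent_consistent_def by blast
qed

lemma lindenbaum:
  assumes "X0 \<subseteq> Inl ` S \<union> Inr ` S" and "sequent_consistent prov X0"
  obtains X where "X0 \<subseteq> X" and "sequent_consistent prov X" and "\<forall>t\<in>S. Inl t \<in> X \<or> Inr t \<in> X"
proof -
  define F where "F = {X. X0 \<subseteq> X \<and> X \<subseteq> Inl ` S \<union> Inr ` S \<and> sequent_consistent prov X}"
  have "\<exists>M\<in>F. \<forall>X\<in>F. M \<subseteq> X \<longrightarrow> X = M"
  proof (rule subset_Zorn_nonempty)
    show "F \<noteq> {}" using assms unfolding F_def by blast
  next
    fix C assume "C \<noteq> {}" and "subset.chain F C"
    moreover from this have "sequent_consistent prov (\<Union>C)"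
      by (intro sequent_consistent_Union_chain) (auto simp: F_def subset.chain_def)
    ultimately show "\<Union>C \<in> F" by (auto simp: F_def subset.chain_def)
  qed
  then obtain M where M: "M \<in> F" and max: "\<And>X. X \<in> F \<Longrightarrow> M \<subseteq> X \<Longrightarrow> X = M" by blast
  have "Inl t \<in> M \<or> Inr t \<in> M" if t: "t \<in> S" for t
  proof -
    have "insert (Inl t) M \<in> F \<or> insert (Inr t) M \<in> F"
      using sequent_consistent_insert[of M t] M t unfolding F_def by auto
    thus ?thesis using max by blast
  qed
  thus thesis using that M unfolding F_def by blast
qed

end

lemma meets_cong: "(\<And>i. i < m \<Longrightarrow> f i = g i) \<Longrightarrow> meets L n f m = meets L n g m"
  by (induction m) auto

lemma joins_cong: "(\<And>i. i < m \<Longrightarrow> f i = g i) \<Longrightarrow> joins L n f m = joins L n g m"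
  by (induction m) auto

locale positive_existential =
  fixes L :: "('a, 'b) pe_alg_scheme"
  assumes closed: "pe_algebra L"
    and ax0: "ax0 L" and ax1: "ax1 L" and ax2: "ax2 L" and ax3: "ax3 L" and ax8: "ax8 L"
begin

lemma zer_car [simp]: "zer L n \<in> car L n" and one_car [simp]: "one L n \<in> car L n"
  using closed by (auto simp: pe_algebra_def)

lemma jn_car [simp]: "x \<in> car L n \<Longrightarrow> y \<in> car L n \<Longrightarrow> jn L n x y \<in> car L n"
  and mt_car [simp]: "x \<in> car L n \<Longrightarrow> y \<in> car L n \<Longrightarrow> mt L n x y \<in> car L n"
  using closed by (auto simp: pe_algebra_def)

lemma ex_car [simp]: "x \<in> car L (Suc n) \<Longrightarrow> ex L n x \<in> car L n"
  using closed by (auto simp: pe_algebra_def)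

lemma sb_car [simp]: "\<alpha> \<in> substs n k \<Longrightarrow> x \<in> car L n \<Longrightarrow> sb L n k \<alpha> x \<in> car L k"
  using closed by (auto simp: pe_algebra_def)

lemma mt_assoc: "\<lbrakk>x \<in> car L n; y \<in> car L n; z \<in> car L n\<rbrakk>
    \<Longrightarrow> mt L n x (mt L n y z) = mt L n (mt L n x y) z"
  and mt_jn_distrib: "\<lbrakk>x \<in> car L n; y \<in> car L n; z \<in> car L n\<rbrakk>
    \<Longrightarrow> mt L n x (jn L n y z) = jn L n (mt L n x y) (mt L n x z)"
  and jn_comm: "\<lbrakk>x \<in> car L n; y \<in> car L n\<rbrakk> \<Longrightarrow> jn L n x y = jn L n y x"
  and mt_comm: "\<lbrakk>x \<in> car L n; y \<in> car L n\<rbrakk> \<Longrightarrow> mt L n x y = mt L n y x"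
  and jn_absorb: "\<lbrakk>x \<in> car L n; y \<in> car L n\<rbrakk> \<Longrightarrow> jn L n x (mt L n x y) = x"
  and mt_absorb: "\<lbrakk>x \<in> car L n; y \<in> car L n\<rbrakk> \<Longrightarrow> mt L n x (jn L n x y) = x"
  and jn_zer: "x \<in> car L n \<Longrightarrow> jn L n x (zer L n) = x"
  and mt_one: "x \<in> car L n \<Longrightarrow> mt L n x (one L n) = x"
  using ax1 unfolding ax1_def by blast+

lemma mt_idem: "x \<in> car L n \<Longrightarrow> mt L n x x = x"
  using mt_absorb[of x n "mt L n x x"] jn_absorb[of x n x] by simp

lemma zer_jn: "x \<in> car L n \<Longrightarrow> jn L n (zer L n) x = x"
  using jn_comm[of x n "zer L n"] jn_zer[of x n] by simp

lemma one_mt: "x \<in> car L n \<Longrightarrow> mt L n (one L n) x = x"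
  using mt_comm[of x n "one L n"] mt_one[of x n] by simp

lemma le_refl: "x \<in> car L n \<Longrightarrow> le L n x x"
  by (simp add: le_def mt_idem)

lemma le_trans:
  "\<lbrakk>x \<in> car L n; y \<in> car L n; z \<in> car L n; le L n x y; le L n y z\<rbrakk> \<Longrightarrow> le L n x z"
proof -
  assume c: "x \<in> car L n" "y \<in> car L n" "z \<in> car L n" and "le L n x y" "le L n y z"
  hence xy: "mt L n x y = x" and yz: "mt L n y z = y" by (simp_all add: le_def)
  have "mt L n x z = mt L n (mt L n x y) z" using xy by simp
  also have "\<dots> = mt L n x (mt L n y z)" using c by (simp add: mt_assoc)
  also have "\<dots> = x" using xy yz by simp
  finally show ?thesis by (simp add: le_def)
qed

lemma le_antisym: "\<lbrakk>x \<in> car L n; y \<in> car L n; le L n x y; le L n y x\<rbrakk> \<Longrightarrow> x = y"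
  unfolding le_def using mt_comm by simp

lemma mt_lower1: "x \<in> car L n \<Longrightarrow> y \<in> car L n \<Longrightarrow> le L n (mt L n x y) x"
  unfolding le_def by (simp add: mt_comm[of "mt L n x y" n x] mt_assoc mt_idem)

lemma mt_lower2: "x \<in> car L n \<Longrightarrow> y \<in> car L n \<Longrightarrow> le L n (mt L n x y) y"
  unfolding le_def by (simp add: mt_assoc[symmetric] mt_idem)

lemma mt_greatest:
  "\<lbrakk>x \<in> car L n; y \<in> car L n; z \<in> car L n; le L n z x; le L n z y\<rbrakk> \<Longrightarrow> le L n z (mt L n x y)"
  unfolding le_def by (metis mt_assoc)

lemma jn_upper1: "x \<in> car L n \<Longrightarrow> y \<in> car L n \<Longrightarrow> le L n x (jn L n x y)"
  unfolding le_def by (simp add: mt_absorb)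

lemma jn_upper2: "x \<in> car L n \<Longrightarrow> y \<in> car L n \<Longrightarrow> le L n y (jn L n x y)"
  using jn_upper1[of y n x] jn_comm[of x n y] by simp

lemma jn_least:
  "\<lbrakk>x \<in> car L n; y \<in> car L n; z \<in> car L n; le L n x z; le L n y z\<rbrakk> \<Longrightarrow> le L n (jn L n x y) z"
proof -
  assume c: "x \<in> car L n" "y \<in> car L n" "z \<in> car L n" and "le L n x z" "le L n y z"
  hence xz: "mt L n x z = x" and yz: "mt L n y z = y" by (simp_all add: le_def)
  have "mt L n (jn L n x y) z = mt L n z (jn L n x y)" using c by (simp add: mt_comm)
  also have "\<dots> = jn L n (mt L n z x) (mt L n z y)" using c by (simp add: mt_jn_distrib)
  also have "\<dots> = jn L n x y" using xz yz c by (simp add: mt_comm)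
  finally show ?thesis by (simp add: le_def)
qed

lemma le_mt_iff: "\<lbrakk>x \<in> car L n; y \<in> car L n; z \<in> car L n\<rbrakk>
    \<Longrightarrow> le L n z (mt L n x y) \<longleftrightarrow> le L n z x \<and> le L n z y"
  by (meson le_trans mt_car mt_greatest mt_lower1 mt_lower2)

lemma jn_le_iff: "\<lbrakk>x \<in> car L n; y \<in> car L n; z \<in> car L n\<rbrakk>
    \<Longrightarrow> le L n (jn L n x y) z \<longleftrightarrow> le L n x z \<and> le L n y z"
  by (meson le_trans jn_car jn_least jn_upper1 jn_upper2)

lemma le_one: "x \<in> car L n \<Longrightarrow> le L n x (one L n)"
  by (simp add: le_def mt_one)

lemma le_zer: "x \<in> car L n \<Longrightarrow> le L n (zer L n) x"
  using jn_upper1[of "zer L n" n x] by (simp add: zer_jn)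

lemma distrib_cut:
  assumes c: "a \<in> car L n" "b \<in> car L n" "t \<in> car L n"
    and le1: "le L n (mt L n a t) b" and le2: "le L n a (jn L n b t)"
  shows "le L n a b"
proof -
  from le2 have "a = mt L n a (jn L n b t)" by (simp add: le_def)
  also have "\<dots> = jn L n (mt L n a b) (mt L n a t)" using c by (simp add: mt_jn_distrib)
  finally have "a = jn L n (mt L n a b) (mt L n a t)" .
  moreover have "le L n (jn L n (mt L n a b) (mt L n a t)) b" using c le1 by (simp add: jn_least mt_lower2)
  ultimately show ?thesis by simp
qed

lemma meets_car: "(\<And>i. i < m \<Longrightarrow> f i \<in> car L n) \<Longrightarrow> meets L n f m \<in> car L n"
  by (induction m) auto

lemma joins_car: "(\<And>i. i < m \<Longrightarrow> f i \<in> car L n) \<Longrightarrow> joins L n f m \<in> car L n"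
  by (induction m) auto

lemma le_meets_iff:
  "\<lbrakk>\<And>i. i < m \<Longrightarrow> f i \<in> car L n; c \<in> car L n\<rbrakk> \<Longrightarrow> le L n c (meets L n f m) \<longleftrightarrow> (\<forall>i<m. le L n c (f i))"
  by (induction m) (auto simp: le_one le_mt_iff meets_car less_Suc_eq)

lemma joins_le_iff:
  "\<lbrakk>\<And>i. i < m \<Longrightarrow> f i \<in> car L n; c \<in> car L n\<rbrakk> \<Longrightarrow> le L n (joins L n f m) c \<longleftrightarrow> (\<forall>i<m. le L n (f i) c)"
  by (induction m) (auto simp: le_zer jn_le_iff joins_car less_Suc_eq)

lemma sb_zer: "\<alpha> \<in> substs n k \<Longrightarrow> sb L n k \<alpha> (zer L n) = zer L k"
  and sb_one: "\<alpha> \<in> substs n k \<Longrightarrow> sb L n k \<alpha> (one L n) = one L k"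
  using ax2 by (simp_all add: ax2_def)

lemma sb_jn: "\<lbrakk>\<alpha> \<in> substs n k; x \<in> car L n; y \<in> car L n\<rbrakk>
    \<Longrightarrow> sb L n k \<alpha> (jn L n x y) = jn L k (sb L n k \<alpha> x) (sb L n k \<alpha> y)"
  and sb_mt: "\<lbrakk>\<alpha> \<in> substs n k; x \<in> car L n; y \<in> car L n\<rbrakk>
    \<Longrightarrow> sb L n k \<alpha> (mt L n x y) = mt L k (sb L n k \<alpha> x) (sb L n k \<alpha> y)"
  using ax2 unfolding ax2_def by blast+

lemma sb_scomp: "\<lbrakk>\<alpha> \<in> substs k n; \<beta> \<in> substs n m; r \<in> car L k\<rbrakk>
    \<Longrightarrow> sb L k m (scomp k \<beta> \<alpha>) r = sb L n m \<beta> (sb L k n \<alpha> r)"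
  using ax3 unfolding ax3_def by blast

lemma sb_le: "\<lbrakk>\<alpha> \<in> substs n k; x \<in> car L n; y \<in> car L n; le L n x y\<rbrakk>
    \<Longrightarrow> le L k (sb L n k \<alpha> x) (sb L n k \<alpha> y)"
  unfolding le_def by (metis sb_mt)

lemma sb_meets: "\<lbrakk>\<alpha> \<in> substs n k; \<And>i. i < m \<Longrightarrow> f i \<in> car L n\<rbrakk>
    \<Longrightarrow> sb L n k \<alpha> (meets L n f m) = meets L k (\<lambda>i. sb L n k \<alpha> (f i)) m"
  by (induction m) (simp_all add: sb_one sb_mt meets_car)

lemma sb_joins: "\<lbrakk>\<alpha> \<in> substs n k; \<And>i. i < m \<Longrightarrow> f i \<in> car L n\<rbrakk>
    \<Longrightarrow> sb L n k \<alpha> (joins L n f m) = joins L k (\<lambda>i. sb L n k \<alpha> (f i)) m"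
  by (induction m) (simp_all add: sb_zer sb_jn joins_car)

end

definition list_pos :: "'v list \<Rightarrow> 'v \<Rightarrow> nat" where
  "list_pos w v = (THE i. i < length w \<and> w ! i = v)"

lemma list_pos_nth: "distinct w \<Longrightarrow> i < length w \<Longrightarrow> list_pos w (w ! i) = i"
  unfolding list_pos_def by (rule the_equality) (auto simp: nth_eq_iff_index_eq)

lemma list_pos_in_set: "distinct w \<Longrightarrow> v \<in> set w \<Longrightarrow> list_pos w v < length w \<and> w ! list_pos w v = v"
  by (metis in_set_conv_nth list_pos_nth)

text \<open>For a list \<open>w\<close> of distinct names and a tuple \<open>x\<close> of names occurring in \<open>w\<close>, the
  substitution \<open>locate w x : length x \<rightarrow> length w\<close> sends the \<open>j\<close>-th coordinate of \<open>x\<close> to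
  the position of that name in \<open>w\<close> (all positions counted from 1).\<close>

definition locate :: "'v list \<Rightarrow> 'v list \<Rightarrow> nat \<Rightarrow> nat" where
  "locate w x = (\<lambda>j\<in>{1..length x}. list_pos w (x ! (j - 1)) + 1)"

lemma locate_substs:
  assumes "distinct w" "set x \<subseteq> set w"
  shows "locate w x \<in> substs (length x) (length w)"
proof -
  have "list_pos w (x ! (j - 1)) < length w" if "j \<in> {1..length x}" for j
  proof -
    have "x ! (j - 1) \<in> set w" using that assms(2) by (auto simp: subsetD)
    thus ?thesis using list_pos_in_set[OF assms(1)] by blast
  qed
  thus ?thesis by (force simp: locate_def substs_def)
qed

lemma scomp_locate:
  assumes "distinct w" "set x \<subseteq> set w"
  shows "scomp (length x) (locate u w) (locate w x) = locate u x"
proof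
  fix j
  show "scomp (length x) (locate u w) (locate w x) j = locate u x j"
  proof (cases "j \<in> {1..length x}")
    case True
    hence "x ! (j - 1) \<in> set w" using assms(2) by (auto simp: subsetD)
    then obtain p where p: "p < length w" "w ! p = x ! (j - 1)" and "locate w x j = p + 1"
      using list_pos_in_set[OF assms(1)] True by (auto simp: locate_def)
    moreover have "locate u w (p + 1) = list_pos u (x ! (j - 1)) + 1"
      using p by (simp add: locate_def)
    ultimately show ?thesis using True by (simp add: scomp_def locate_def)
  qed (auto simp: scomp_def locate_def)
qed

lemma length_subst_tuple [simp]: "length (subst_tuple n \<alpha> x) = n"
  by (simp add: subst_tuple_def)

lemma subst_tuple_nth: "j \<in> {1..n} \<Longrightarrow> subst_tuple n \<alpha> x ! (j - 1) = x ! (\<alpha> j - 1)"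
  by (auto simp del: upt_Suc simp: subst_tuple_def)

lemma set_subst_tuple:
  assumes "\<alpha> \<in> substs n (length x)"
  shows "set (subst_tuple n \<alpha> x) \<subseteq> set x"
proof -
  have "\<alpha> j \<in> {1..length x}" if "j \<in> {1..n}" for j
    using assms that by (auto simp: substs_def)
  thus ?thesis by (force simp del: upt_Suc simp: subst_tuple_def)
qed

lemma scomp_locate_subst_tuple:
  assumes "\<alpha> \<in> substs n (length x)"
  shows "scomp n (locate w x) \<alpha> = locate w (subst_tuple n \<alpha> x)"
proof
  fix j
  show "scomp n (locate w x) \<alpha> j = locate w (subst_tuple n \<alpha> x) j"
  proof (cases "j \<in> {1..n}")
    case True
    hence "\<alpha> j \<in> {1..length x}" using assms by (auto simp: substs_def)
    hence "locate w x (\<alpha> j) = list_pos w (x ! (\<alpha> j - 1)) + 1" by (simp add: locate_def)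
    moreover have "subst_tuple n \<alpha> x ! (j - 1) = x ! (\<alpha> j - 1)" by (rule subst_tuple_nth[OF True])
    hence "locate w (subst_tuple n \<alpha> x) j = list_pos w (x ! (\<alpha> j - 1)) + 1"
      using True by (simp add: locate_def)
    ultimately show ?thesis using True by (simp add: scomp_def)
  qed (auto simp: scomp_def locate_def)
qed

lemma subst_tuple_cyl: "length xs = n \<Longrightarrow> subst_tuple n (cyl n) (xs @ [y]) = xs"
  by (rule nth_equalityI) (auto simp: subst_tuple_def cyl_def nth_append simp del: upt_Suc)

lemma cyl_substs: "cyl n \<in> substs n (Suc n)"
  by (auto simp: cyl_def substs_def)

lemma nth_concat_offset:
  "i < length bs \<Longrightarrow> m < length (bs ! i) \<Longrightarrow>
   (\<Sum>j<i. length (bs ! j)) + m < length (concat bs) \<and>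
   concat bs ! ((\<Sum>j<i. length (bs ! j)) + m) = bs ! i ! m"
proof (induction bs arbitrary: i)
  case (Cons b bs)
  show ?case
  proof (cases i)
    case (Suc i')
    have "(\<Sum>j<i. length ((b # bs) ! j)) = length b + (\<Sum>j<i'. length (bs ! j))"
      unfolding Suc sum.lessThan_Suc_shift by simp
    thus ?thesis using Cons Suc by (simp add: nth_append)
  qed (use Cons in \<open>simp add: nth_append\<close>)
qed simp

lemma locate_concat:
  assumes "distinct (concat bs)" "i < length bs"
  shows "locate (concat bs) (bs ! i) = pcyl (\<lambda>j. length (bs ! j)) i"
proof
  fix l
  show "locate (concat bs) (bs ! i) l = pcyl (\<lambda>j. length (bs ! j)) i l"
  proof (cases "l \<in> {1..length (bs ! i)}")
    case True
    hence "l - 1 < length (bs ! i)" by auto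
    from nth_concat_offset[OF assms(2) this]
    have "list_pos (concat bs) (bs ! i ! (l - 1)) = (\<Sum>j<i. length (bs ! j)) + (l - 1)"
      using list_pos_nth[OF assms(1)] by metis
    thus ?thesis using True by (simp add: locate_def pcyl_def)
  qed (auto simp: locate_def pcyl_def)
qed

type_synonym 'a witness = "(nat \<times> 'a) set set"
type_synonym 'a atom = "nat \<times> 'a witness list \<times> 'a"

text \<open>The \<open>j\<close>-th witness for a gap \<open>(n, r, s)\<close> is the Kuratowski pair of \<open>(n, r)\<close> and
  \<open>(j, s)\<close>; any injective encoding into the prescribed carrier type would do.\<close>

definition witness :: "nat \<Rightarrow> 'a \<Rightarrow> 'a \<Rightarrow> nat \<Rightarrow> 'a witness" where
  "witness n r s j = {{(n, r)}, {(n, r), (j, s)}}"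

lemma witness_inj: "witness n r s j = witness n' r' s' j' \<Longrightarrow> n = n' \<and> r = r' \<and> s = s' \<and> j = j'"
  unfolding witness_def by (auto simp: doubleton_eq_iff insert_eq_iff)

fun witness_block :: "nat \<times> 'a \<times> 'a \<Rightarrow> 'a witness list" where
  "witness_block (n, r, s) = map (witness n r s) [1..<Suc n]"

definition left_atom :: "nat \<times> 'a \<times> 'a \<Rightarrow> 'a atom" where
  "left_atom p = (fst p, witness_block p, fst (snd p))"

definition right_atom :: "nat \<times> 'a \<times> 'a \<Rightarrow> 'a atom" where
  "right_atom p = (fst p, witness_block p, snd (snd p))"

lemma length_witness_block: "length (witness_block p) = fst p"
  by (cases p) simp

lemma distinct_concat_witness_blocks: "distinct Q \<Longrightarrow> distinct (concat (map witness_block Q))"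
proof (induction Q)
  case (Cons q Q)
  have "set (witness_block q) \<inter> set (witness_block q') = {}" if "q' \<in> set Q" for q'
    using Cons.prems that by (cases q; cases q') (auto dest: witness_inj)
  moreover have "distinct (witness_block q)"
    by (cases q) (auto simp: distinct_map inj_on_def dest: witness_inj)
  ultimately show ?case using Cons by auto
qed simp

context positive_existential
begin

definition gaps :: "(nat \<times> 'a \<times> 'a) set" where
  "gaps = {(n, r, s). r \<in> car L n \<and> s \<in> car L n \<and> \<not> le L n r s}"

definition witnesses :: "'a witness set" where
  "witnesses = (\<Union>p\<in>gaps. set (witness_block p))"

definition atoms :: "'a atom set" where
  "atoms = {(n, x, r). x \<in> tuples witnesses n \<and> r \<in> car L n}"

definition interp :: "'a witness list \<Rightarrow> 'a atom \<Rightarrow> 'a" where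
  "interp w t = (case t of (n, x, r) \<Rightarrow> sb L n (length w) (locate w x) r)"

definition conj_interp :: "'a witness list \<Rightarrow> 'a atom list \<Rightarrow> 'a" where
  "conj_interp w A = meets L (length w) (\<lambda>i. interp w (A ! i)) (length A)"

definition disj_interp :: "'a witness list \<Rightarrow> 'a atom list \<Rightarrow> 'a" where
  "disj_interp w B = joins L (length w) (\<lambda>i. interp w (B ! i)) (length B)"

definition fits :: "'a witness list \<Rightarrow> 'a atom list \<Rightarrow> bool" where
  "fits w T \<longleftrightarrow> distinct w \<and> set T \<subseteq> atoms \<and> (\<forall>t\<in>set T. set (fst (snd t)) \<subseteq> set w)"

definition derivable_in :: "'a witness list \<Rightarrow> 'a atom list \<Rightarrow> 'a atom list \<Rightarrow> bool" where
  "derivable_in w A B \<longleftrightarrow>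
     set w \<subseteq> witnesses \<and> fits w (A @ B) \<and> le L (length w) (conj_interp w A) (disj_interp w B)"

definition derivable :: "'a atom list \<Rightarrow> 'a atom list \<Rightarrow> bool" where
  "derivable A B \<longleftrightarrow> (\<exists>w. derivable_in w A B)"

lemma atom_vars_witnesses: "t \<in> atoms \<Longrightarrow> set (fst (snd t)) \<subseteq> witnesses"
  by (auto simp: atoms_def tuples_def)

lemma interp_car:
  assumes "distinct w" "t \<in> atoms" "set (fst (snd t)) \<subseteq> set w"
  shows "interp w t \<in> car L (length w)"
  using assms locate_substs[OF assms(1)] by (auto simp: interp_def atoms_def tuples_def)

lemma fits_interp_car: "fits w T \<Longrightarrow> t \<in> set T \<Longrightarrow> interp w t \<in> car L (length w)"
  unfolding fits_def by (blast intro: interp_car)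

lemma conj_interp_car: "fits w A \<Longrightarrow> conj_interp w A \<in> car L (length w)"
  unfolding conj_interp_def by (intro meets_car fits_interp_car) auto

lemma disj_interp_car: "fits w B \<Longrightarrow> disj_interp w B \<in> car L (length w)"
  unfolding disj_interp_def by (intro joins_car fits_interp_car) auto

lemma le_conj_interp_iff:
  "fits w A \<Longrightarrow> c \<in> car L (length w) \<Longrightarrow>
   le L (length w) c (conj_interp w A) \<longleftrightarrow> (\<forall>a\<in>set A. le L (length w) c (interp w a))"
  unfolding conj_interp_def by (simp add: le_meets_iff fits_interp_car all_set_conv_all_nth)

lemma disj_interp_le_iff:
  "fits w B \<Longrightarrow> c \<in> car L (length w) \<Longrightarrow>
   le L (length w) (disj_interp w B) c \<longleftrightarrow> (\<forall>b\<in>set B. le L (length w) (interp w b) c)"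
  unfolding disj_interp_def by (simp add: joins_le_iff fits_interp_car all_set_conv_all_nth)

lemma conj_interp_Cons:
  assumes "fits w (t # A)"
  shows "conj_interp w (t # A) = mt L (length w) (conj_interp w A) (interp w t)"
proof -
  have fA: "fits w A" and ct: "interp w t \<in> car L (length w)"
    using assms fits_interp_car[OF assms] by (auto simp: fits_def)
  have cA: "conj_interp w A \<in> car L (length w)" and ctA: "conj_interp w (t # A) \<in> car L (length w)"
    using conj_interp_car fA assms by blast+
  show ?thesis
  proof (rule le_antisym)
    show "le L (length w) (conj_interp w (t # A)) (mt L (length w) (conj_interp w A) (interp w t))"
      using le_conj_interp_iff[OF assms ctA] le_conj_interp_iff[OF fA ctA] le_refl[OF ctA] cA ct ctA
      by (simp add: le_mt_iff)
    have "\<forall>a\<in>set A. le L (length w) (conj_interp w A) (interp w a)"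
      using le_conj_interp_iff[OF fA cA] le_refl[OF cA] by blast
    hence "\<forall>a\<in>set A. le L (length w) (mt L (length w) (conj_interp w A) (interp w t)) (interp w a)"
      using cA ct fits_interp_car[OF fA] by (blast intro: le_trans mt_lower1 mt_car)
    thus "le L (length w) (mt L (length w) (conj_interp w A) (interp w t)) (conj_interp w (t # A))"
      using le_conj_interp_iff[OF assms] cA ct mt_lower2 by simp
  qed (use cA ct ctA in simp_all)
qed

lemma disj_interp_Cons:
  assumes "fits w (t # B)"
  shows "disj_interp w (t # B) = jn L (length w) (disj_interp w B) (interp w t)"
proof -
  have fB: "fits w B" and ct: "interp w t \<in> car L (length w)"
    using assms fits_interp_car[OF assms] by (auto simp: fits_def)
  have cB: "disj_interp w B \<in> car L (length w)" and ctB: "disj_interp w (t # B) \<in> car L (length w)"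
    using disj_interp_car fB assms by blast+
  show ?thesis
  proof (rule le_antisym)
    have "\<forall>b\<in>set B. le L (length w) (interp w b) (disj_interp w B)"
      using disj_interp_le_iff[OF fB cB] le_refl[OF cB] by blast
    hence "\<forall>b\<in>set B. le L (length w) (interp w b) (jn L (length w) (disj_interp w B) (interp w t))"
      using cB ct fits_interp_car[OF fB] by (blast intro: le_trans jn_upper1 jn_car)
    thus "le L (length w) (disj_interp w (t # B)) (jn L (length w) (disj_interp w B) (interp w t))"
      using disj_interp_le_iff[OF assms] cB ct jn_upper2 by simp
    show "le L (length w) (jn L (length w) (disj_interp w B) (interp w t)) (disj_interp w (t # B))"
      using disj_interp_le_iff[OF assms ctB] disj_interp_le_iff[OF fB ctB] le_refl[OF ctB] cB ct ctB
      by (simp add: jn_le_iff)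
  qed (use cB ct ctB in simp_all)
qed

lemma interp_lift:
  assumes "distinct w" "distinct u" "set w \<subseteq> set u" "t \<in> atoms" "set (fst (snd t)) \<subseteq> set w"
  shows "interp u t = sb L (length w) (length u) (locate u w) (interp w t)"
proof -
  obtain n x r where t: "t = (n, x, r)" by (cases t)
  have n: "length x = n" and r: "r \<in> car L n" using assms(4) by (auto simp: t atoms_def tuples_def)
  have x: "set x \<subseteq> set w" using assms(5) by (simp add: t)
  have "interp u t = sb L n (length u) (scomp n (locate u w) (locate w x)) r"
    using scomp_locate[OF assms(1) x] n by (simp add: t interp_def)
  also have "\<dots> = sb L (length w) (length u) (locate u w) (sb L n (length w) (locate w x) r)"
    using sb_scomp locate_substs[OF assms(1) x] locate_substs[OF assms(2,3)] r n by simp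
  finally show ?thesis by (simp add: t interp_def)
qed

lemma derivable_in_lift:
  assumes der: "derivable_in w A B" and u: "distinct u" "set u \<subseteq> witnesses" "set w \<subseteq> set u"
  shows "derivable_in u A B"
proof -
  have fw: "fits w (A @ B)" and le0: "le L (length w) (conj_interp w A) (disj_interp w B)"
    using der by (auto simp: derivable_in_def)
  hence dw: "distinct w" and fA: "fits w A" and fB: "fits w B" by (auto simp: fits_def)
  have \<beta>: "locate u w \<in> substs (length w) (length u)" by (rule locate_substs[OF u(1,3)])
  have lift: "interp u t = sb L (length w) (length u) (locate u w) (interp w t)"
    if "t \<in> set (A @ B)" for t
    using fw that by (intro interp_lift[OF dw u(1,3)]) (auto simp: fits_def)
  have "conj_interp u A = sb L (length w) (length u) (locate u w) (conj_interp w A)"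
    unfolding conj_interp_def
    by (subst sb_meets[OF \<beta>]) (auto intro!: meets_cong lift fits_interp_car[OF fA])
  moreover have "disj_interp u B = sb L (length w) (length u) (locate u w) (disj_interp w B)"
    unfolding disj_interp_def
    by (subst sb_joins[OF \<beta>]) (auto intro!: joins_cong lift fits_interp_car[OF fB])
  moreover have "fits u (A @ B)" using fw u by (fastforce simp: fits_def)
  ultimately show ?thesis
    using sb_le[OF \<beta> conj_interp_car[OF fA] disj_interp_car[OF fB] le0] u(2)
    by (simp add: derivable_in_def)
qed

lemma derivable_in_mono:
  assumes der: "derivable_in u A B" and "set A \<subseteq> set A'" "set B \<subseteq> set B'" and f: "fits u (A' @ B')"
  shows "derivable_in u A' B'"
proof -
  have fA: "fits u A" "fits u A'" and fB: "fits u B" "fits u B'"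
    using der f assms(2,3) by (auto simp: derivable_in_def fits_def)
  note c = conj_interp_car[OF fA(1)] conj_interp_car[OF fA(2)]
    disj_interp_car[OF fB(1)] disj_interp_car[OF fB(2)]
  have "le L (length u) (conj_interp u A') (conj_interp u A)"
    using le_conj_interp_iff[OF fA(1) c(2)] le_conj_interp_iff[OF fA(2) c(2)] le_refl[OF c(2)] assms(2)
    by blast
  moreover have "le L (length u) (disj_interp u B) (disj_interp u B')"
    using disj_interp_le_iff[OF fB(1) c(4)] disj_interp_le_iff[OF fB(2) c(4)] le_refl[OF c(4)] assms(3)
    by blast
  moreover have "le L (length u) (conj_interp u A) (disj_interp u B)"
    using der by (simp add: derivable_in_def)
  ultimately have "le L (length u) (conj_interp u A') (disj_interp u B')"
    using c by (meson le_trans)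
  thus ?thesis using der f by (simp add: derivable_in_def)
qed

lemma derivable_weaken:
  assumes "derivable A B" "set A \<subseteq> set A'" "set B \<subseteq> set B'" "set A' \<subseteq> atoms" "set B' \<subseteq> atoms"
  shows "derivable A' B'"
proof -
  obtain w where w: "derivable_in w A B" using assms(1) by (auto simp: derivable_def)
  define u where "u = remdups (w @ concat (map (fst \<circ> snd) (A' @ B')))"
  have "set u \<subseteq> witnesses" using w assms(4,5) atom_vars_witnesses
    by (fastforce simp: u_def derivable_in_def)
  hence "derivable_in u A B" by (rule derivable_in_lift[OF w, rotated]) (auto simp: u_def)
  moreover have "fits u (A' @ B')" using assms(4,5) by (force simp: fits_def u_def)
  ultimately show ?thesis using assms(2,3) derivable_in_mono derivable_def by blast
qed

lemma derivable_cut: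
  assumes "derivable (t # A) B" "derivable A (t # B)"
  shows "derivable A B"
proof -
  obtain w1 w2 where w1: "derivable_in w1 (t # A) B" and w2: "derivable_in w2 A (t # B)"
    using assms by (auto simp: derivable_def)
  define u where "u = remdups (w1 @ w2)"
  have u: "distinct u" "set u \<subseteq> witnesses"
    using w1 w2 by (auto simp: u_def derivable_in_def)
  have d1: "derivable_in u (t # A) B" and d2: "derivable_in u A (t # B)"
    using derivable_in_lift[OF w1 u] derivable_in_lift[OF w2 u] by (auto simp: u_def)
  hence f: "fits u (t # A)" "fits u (t # B)" "fits u (A @ B)" by (auto simp: derivable_in_def fits_def)
  hence c: "conj_interp u A \<in> car L (length u)" "disj_interp u B \<in> car L (length u)"
    "interp u t \<in> car L (length u)"
    using fits_interp_car[OF f(1)] by (auto simp: fits_def intro: conj_interp_car disj_interp_car)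
  have "le L (length u) (conj_interp u A) (disj_interp u B)"
    using distrib_cut[OF c] d1 d2 by (simp add: derivable_in_def conj_interp_Cons[OF f(1)]
        disj_interp_Cons[OF f(2)])
  thus ?thesis using u f(3) by (auto simp: derivable_def derivable_in_def)
qed

end

sublocale positive_existential \<subseteq> cut_calculus atoms derivable
  by unfold_locales (auto intro: derivable_weaken derivable_cut)

context positive_existential
begin

definition gap_theory :: "('a atom + 'a atom) set" where
  "gap_theory = Inl ` left_atom ` gaps \<union> Inr ` right_atom ` gaps"

lemma witness_block_witnesses: "p \<in> gaps \<Longrightarrow> set (witness_block p) \<subseteq> witnesses"
  by (auto simp: witnesses_def)

lemma gap_atoms: "p \<in> gaps \<Longrightarrow> left_atom p \<in> atoms \<and> right_atom p \<in> atoms"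
  using witness_block_witnesses[of p] length_witness_block[of p]
  by (auto simp: gaps_def atoms_def tuples_def left_atom_def right_atom_def)

lemma gap_theory_atoms: "gap_theory \<subseteq> Inl ` atoms \<union> Inr ` atoms"
  using gap_atoms by (auto simp: gap_theory_def)

text \<open>Axiom (0) enters here: the witness blocks of distinct gaps lie side by side in their
  concatenation, where locating them gives the partitioning cylindrifications.\<close>

lemma not_derivable_in_gap_blocks:
  assumes Q: "distinct Q" "set Q \<subseteq> gaps"
  shows "\<not> derivable_in (concat (map witness_block Q)) (map left_atom Q) (map right_atom Q)"
proof
  define u where "u = concat (map witness_block Q)"
  define ks where "ks j = length (map witness_block Q ! j)" for j
  define N where "N = (\<Sum>j<length Q. ks j)"
  define r s where "r i = fst (snd (Q ! i))" and "s i = snd (snd (Q ! i))" for i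
  have N: "length u = N"
    by (simp add: N_def u_def ks_def length_concat sum_list_sum_nth atLeast0LessThan)
  have Qi: "Q ! i \<in> gaps" and ks: "ks i = fst (Q ! i)" if "i < length Q" for i
    using that Q by (auto simp: ks_def length_witness_block)
  have pc: "locate u (witness_block (Q ! i)) = pcyl ks i" if "i < length Q" for i
    using locate_concat[of "map witness_block Q" i] distinct_concat_witness_blocks[OF Q(1)] that
    by (simp add: u_def ks_def[abs_def])
  assume "derivable_in u (map left_atom Q) (map right_atom Q)"
  hence "le L N (conj_interp u (map left_atom Q)) (disj_interp u (map right_atom Q))"
    by (simp add: derivable_in_def N)
  moreover have
    "conj_interp u (map left_atom Q) = meets L N (\<lambda>i. sb L (ks i) N (pcyl ks i) (r i)) (length Q)"
    unfolding conj_interp_def N length_map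
    by (rule meets_cong) (use pc ks in \<open>simp add: interp_def left_atom_def r_def N\<close>)
  moreover have
    "disj_interp u (map right_atom Q) = joins L N (\<lambda>i. sb L (ks i) N (pcyl ks i) (s i)) (length Q)"
    unfolding disj_interp_def N length_map
    by (rule joins_cong) (use pc ks in \<open>simp add: interp_def right_atom_def s_def N\<close>)
  ultimately have "le L N (meets L N (\<lambda>i. sb L (ks i) N (pcyl ks i) (r i)) (length Q))
                          (joins L N (\<lambda>i. sb L (ks i) N (pcyl ks i) (s i)) (length Q))"
    by simp
  moreover have "r i \<in> car L (ks i) \<and> s i \<in> car L (ks i)" if "i < length Q" for i
    using Qi[OF that] ks[OF that] by (auto simp: gaps_def r_def s_def)
  ultimately obtain i where i: "i < length Q" "le L (ks i) (r i) (s i)"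
    using ax0[unfolded ax0_def, rule_format, where m = "length Q" and ks = ks and r = r and s = s]
    unfolding N_def by blast
  thus False using Qi[OF i(1)] ks[OF i(1)] by (cases "Q ! i") (auto simp: gaps_def r_def s_def)
qed

lemma gap_theory_consistent: "sequent_consistent derivable gap_theory"
  unfolding sequent_consistent_def
proof (intro allI impI notI)
  fix A B
  assume "set A \<subseteq> {t. Inl t \<in> gap_theory}" "set B \<subseteq> {t. Inr t \<in> gap_theory}"
  hence "\<forall>a\<in>set A. \<exists>p\<in>gaps. a = left_atom p" "\<forall>b\<in>set B. \<exists>p\<in>gaps. b = right_atom p"
    by (auto simp: gap_theory_def)
  then obtain pA pB where
    pA: "\<forall>a\<in>set A. pA a \<in> gaps \<and> a = left_atom (pA a)" and
    pB: "\<forall>b\<in>set B. pB b \<in> gaps \<and> b = right_atom (pB b)"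
    by metis
  assume "derivable A B"
  then obtain w where w: "derivable_in w A B" by (auto simp: derivable_def)
  hence "\<forall>v\<in>set w. \<exists>p\<in>gaps. v \<in> set (witness_block p)"
    by (auto simp: derivable_in_def witnesses_def)
  then obtain owner where owner: "\<forall>v\<in>set w. owner v \<in> gaps \<and> v \<in> set (witness_block (owner v))"
    by metis
  define Q where "Q = remdups (map pA A @ map pB B @ map owner w)"
  define u where "u = concat (map witness_block Q)"
  have Q: "distinct Q" "set Q \<subseteq> gaps" using pA pB owner by (auto simp: Q_def)
  have "set u \<subseteq> witnesses" using Q(2) by (auto simp: u_def witnesses_def)
  moreover have "set w \<subseteq> set u" using owner by (force simp: u_def Q_def)
  ultimately have "derivable_in u A B"
    using derivable_in_lift[OF w] distinct_concat_witness_blocks[OF Q(1)] by (simp add: u_def)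
  moreover have "set A \<subseteq> set (map left_atom Q)" "set B \<subseteq> set (map right_atom Q)"
    using pA pB by (force simp: Q_def)+
  moreover have "fits u (map left_atom Q @ map right_atom Q)"
    using gap_atoms Q distinct_concat_witness_blocks[OF Q(1)]
    by (force simp: fits_def u_def left_atom_def right_atom_def)
  ultimately have "derivable_in u (map left_atom Q) (map right_atom Q)"
    by (rule derivable_in_mono)
  with not_derivable_in_gap_blocks[OF Q] show False by (simp add: u_def)
qed

lemma derivable_in_singleton_iff:
  "set w \<subseteq> witnesses \<Longrightarrow> fits w [t, t'] \<Longrightarrow>
   derivable_in w [t] [t'] \<longleftrightarrow> le L (length w) (interp w t) (interp w t')"
  using fits_interp_car[of w "[t, t']"]
  by (simp add: derivable_in_def conj_interp_def disj_interp_def one_mt zer_jn)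

lemma derivable_at:
  assumes x: "x \<in> tuples witnesses n" and rs: "set rs \<subseteq> car L n" and ss: "set ss \<subseteq> car L n"
    and le: "le L n (meets L n ((!) rs) (length rs)) (joins L n ((!) ss) (length ss))"
  shows "derivable (map (\<lambda>r. (n, x, r)) rs) (map (\<lambda>r. (n, x, r)) ss)"
proof -
  define w where "w = remdups x"
  have w: "distinct w" "set w = set x" "set w \<subseteq> witnesses" and "length x = n"
    using x by (auto simp: w_def tuples_def)
  hence \<beta>: "locate w x \<in> substs n (length w)" using locate_substs[of w x] by simp
  have "conj_interp w (map (\<lambda>r. (n, x, r)) rs)
      = sb L n (length w) (locate w x) (meets L n ((!) rs) (length rs))"
    unfolding conj_interp_def using rs
    by (subst sb_meets[OF \<beta>]) (auto intro!: meets_cong simp: interp_def)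
  moreover have "disj_interp w (map (\<lambda>r. (n, x, r)) ss)
      = sb L n (length w) (locate w x) (joins L n ((!) ss) (length ss))"
    unfolding disj_interp_def using ss
    by (subst sb_joins[OF \<beta>]) (auto intro!: joins_cong simp: interp_def)
  moreover have "meets L n ((!) rs) (length rs) \<in> car L n" "joins L n ((!) ss) (length ss) \<in> car L n"
    using rs ss by (auto intro!: meets_car joins_car)
  moreover have "fits w (map (\<lambda>r. (n, x, r)) rs @ map (\<lambda>r. (n, x, r)) ss)"
    using w x rs ss by (auto simp: fits_def atoms_def)
  ultimately have "derivable_in w (map (\<lambda>r. (n, x, r)) rs) (map (\<lambda>r. (n, x, r)) ss)"
    using sb_le[OF \<beta> _ _ le] w by (simp add: derivable_in_def)
  thus ?thesis by (auto simp: derivable_def)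
qed

lemma derivable_at_le:
  "\<lbrakk>x \<in> tuples witnesses n; r \<in> car L n; s \<in> car L n; le L n r s\<rbrakk> \<Longrightarrow> derivable [(n, x, r)] [(n, x, s)]"
  using derivable_at[of x n "[r]" "[s]"] by (simp add: one_mt zer_jn)

lemma derivable_refl: "(n, x, r) \<in> atoms \<Longrightarrow> derivable [(n, x, r)] [(n, x, r)]"
  by (simp add: atoms_def derivable_at_le le_refl)

lemma derivable_subst:
  assumes \<alpha>: "\<alpha> \<in> substs n k" and x: "x \<in> tuples witnesses k" and r: "r \<in> car L n"
  shows "derivable [(k, x, sb L n k \<alpha> r)] [(n, subst_tuple n \<alpha> x, r)]"
    and "derivable [(n, subst_tuple n \<alpha> x, r)] [(k, x, sb L n k \<alpha> r)]"
proof -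
  define w where "w = remdups x"
  have w: "distinct w" "set w = set x" "set w \<subseteq> witnesses" and k: "length x = k"
    using x by (auto simp: w_def tuples_def)
  have y: "set (subst_tuple n \<alpha> x) \<subseteq> set x" using set_subst_tuple \<alpha> k by blast
  have \<beta>: "locate w x \<in> substs k (length w)" using locate_substs[of w x] w k by simp
  have "interp w (k, x, sb L n k \<alpha> r) = sb L n (length w) (scomp n (locate w x) \<alpha>) r"
    using sb_scomp[OF \<alpha> \<beta> r] by (simp add: interp_def)
  also have "\<dots> = interp w (n, subst_tuple n \<alpha> x, r)"
    using scomp_locate_subst_tuple[of \<alpha> n x w] \<alpha> k by (simp add: interp_def)
  finally have eq: "interp w (k, x, sb L n k \<alpha> r) = interp w (n, subst_tuple n \<alpha> x, r)" .
  have f: "fits w [(k, x, sb L n k \<alpha> r), (n, subst_tuple n \<alpha> x, r)]"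
          "fits w [(n, subst_tuple n \<alpha> x, r), (k, x, sb L n k \<alpha> r)]"
    using w x y \<alpha> r by (auto simp: fits_def atoms_def tuples_def)
  have "interp w (k, x, sb L n k \<alpha> r) \<in> car L (length w)" using fits_interp_car[OF f(1)] by simp
  hence "derivable_in w [(k, x, sb L n k \<alpha> r)] [(n, subst_tuple n \<alpha> x, r)]"
    and "derivable_in w [(n, subst_tuple n \<alpha> x, r)] [(k, x, sb L n k \<alpha> r)]"
    using derivable_in_singleton_iff[OF w(3) f(1)] derivable_in_singleton_iff[OF w(3) f(2)] eq le_refl
    by simp_all
  thus "derivable [(k, x, sb L n k \<alpha> r)] [(n, subst_tuple n \<alpha> x, r)]"
    and "derivable [(n, subst_tuple n \<alpha> x, r)] [(k, x, sb L n k \<alpha> r)]"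
    by (auto simp: derivable_def)
qed

end

locale complete_gap_theory = positive_existential L for L :: "('a, 'b) pe_alg_scheme" +
  fixes X :: "('a atom + 'a atom) set"
  assumes gap_theory_subset: "gap_theory \<subseteq> X"
    and consistent: "sequent_consistent derivable X"
    and complete: "\<forall>t\<in>atoms. Inl t \<in> X \<or> Inr t \<in> X"
begin

definition val :: "nat \<Rightarrow> 'a \<Rightarrow> 'a witness list set" where
  "val n r = {x \<in> tuples witnesses n. Inl (n, x, r) \<in> X}"

lemma asserted_if_derivable:
  assumes "t \<in> atoms" "\<forall>a\<in>set A. Inl a \<in> X" "derivable A [t]"
  shows "Inl t \<in> X"
  using assms consistent complete unfolding sequent_consistent_def by fastforce

lemma asserted_some_if_derivable:
  assumes "Inl t \<in> X" "set B \<subseteq> atoms" "derivable [t] B"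
  shows "\<exists>b\<in>set B. Inl b \<in> X"
proof (rule ccontr)
  assume "\<not> ?thesis"
  hence "set B \<subseteq> {b. Inr b \<in> X}" using assms(2) complete by blast
  thus False using assms(1,3) consistent unfolding sequent_consistent_def by auto
qed

lemma val_one: "val n (one L n) = tuples witnesses n"
proof -
  have "Inl (n, x, one L n) \<in> X" if "x \<in> tuples witnesses n" for x
    using asserted_if_derivable[of "(n, x, one L n)" "[]"] derivable_at[OF that, of "[]" "[one L n]"] that
    by (simp add: atoms_def zer_jn le_refl)
  thus ?thesis by (auto simp: val_def)
qed

lemma val_zer: "val n (zer L n) = {}"
proof -
  have "Inl (n, x, zer L n) \<notin> X" if "x \<in> tuples witnesses n" for x
  proof -
    have "derivable [(n, x, zer L n)] []"
      using derivable_at[OF that, of "[zer L n]" "[]"] by (simp add: one_mt le_refl)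
    thus ?thesis using asserted_some_if_derivable[of "(n, x, zer L n)" "[]"] by auto
  qed
  thus ?thesis by (auto simp: val_def)
qed

lemma val_mt:
  assumes r: "r \<in> car L n" and s: "s \<in> car L n"
  shows "val n (mt L n r s) = val n r \<inter> val n s"
proof -
  have "Inl (n, x, mt L n r s) \<in> X \<longleftrightarrow> Inl (n, x, r) \<in> X \<and> Inl (n, x, s) \<in> X"
    if x: "x \<in> tuples witnesses n" for x
  proof -
    have at: "(n, x, r) \<in> atoms" "(n, x, s) \<in> atoms" "(n, x, mt L n r s) \<in> atoms"
      using x r s by (auto simp: atoms_def)
    have d: "derivable [(n, x, r), (n, x, s)] [(n, x, mt L n r s)]"
      using derivable_at[OF x, of "[r, s]" "[mt L n r s]"] r s
      by (simp add: numeral_2_eq_2 zer_jn one_mt le_refl)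
    have dr: "derivable [(n, x, mt L n r s)] [(n, x, r)]"
      and ds: "derivable [(n, x, mt L n r s)] [(n, x, s)]"
      using x r s by (simp_all add: derivable_at_le mt_lower1 mt_lower2)
    show ?thesis
    proof
      assume "Inl (n, x, mt L n r s) \<in> X"
      thus "Inl (n, x, r) \<in> X \<and> Inl (n, x, s) \<in> X"
        using asserted_if_derivable[OF _ _ dr] asserted_if_derivable[OF _ _ ds] at by simp
    next
      assume "Inl (n, x, r) \<in> X \<and> Inl (n, x, s) \<in> X"
      thus "Inl (n, x, mt L n r s) \<in> X" using asserted_if_derivable[OF _ _ d] at by simp
    qed
  qed
  thus ?thesis by (auto simp: val_def)
qed

lemma val_jn:
  assumes r: "r \<in> car L n" and s: "s \<in> car L n"
  shows "val n (jn L n r s) = val n r \<union> val n s"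
proof -
  have "Inl (n, x, jn L n r s) \<in> X \<longleftrightarrow> Inl (n, x, r) \<in> X \<or> Inl (n, x, s) \<in> X"
    if x: "x \<in> tuples witnesses n" for x
  proof -
    have at: "(n, x, r) \<in> atoms" "(n, x, s) \<in> atoms" "(n, x, jn L n r s) \<in> atoms"
      using x r s by (auto simp: atoms_def)
    have d: "derivable [(n, x, jn L n r s)] [(n, x, r), (n, x, s)]"
      using derivable_at[OF x, of "[jn L n r s]" "[r, s]"] r s
      by (simp add: numeral_2_eq_2 zer_jn one_mt le_refl)
    have dr: "derivable [(n, x, r)] [(n, x, jn L n r s)]"
      and ds: "derivable [(n, x, s)] [(n, x, jn L n r s)]"
      using x r s by (simp_all add: derivable_at_le jn_upper1 jn_upper2)
    show ?thesis
    proof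
      assume "Inl (n, x, jn L n r s) \<in> X"
      thus "Inl (n, x, r) \<in> X \<or> Inl (n, x, s) \<in> X" using asserted_some_if_derivable[OF _ _ d] at by simp
    next
      assume "Inl (n, x, r) \<in> X \<or> Inl (n, x, s) \<in> X"
      thus "Inl (n, x, jn L n r s) \<in> X"
        using asserted_if_derivable[OF _ _ dr] asserted_if_derivable[OF _ _ ds] at by auto
    qed
  qed
  thus ?thesis by (auto simp: val_def)
qed

lemma val_mono: "\<lbrakk>r \<in> car L n; s \<in> car L n; le L n r s\<rbrakk> \<Longrightarrow> val n r \<subseteq> val n s"
  by (metis Int_lower2 le_def mt_comm val_mt)

lemma val_sb:
  assumes \<alpha>: "\<alpha> \<in> substs n k" and r: "r \<in> car L n"
  shows "val k (sb L n k \<alpha> r) = subst_rel witnesses n k \<alpha> (val n r)"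
proof -
  have "Inl (k, x, sb L n k \<alpha> r) \<in> X \<longleftrightarrow>
      Inl (n, subst_tuple n \<alpha> x, r) \<in> X \<and> subst_tuple n \<alpha> x \<in> tuples witnesses n"
    if x: "x \<in> tuples witnesses k" for x
  proof -
    have y: "subst_tuple n \<alpha> x \<in> tuples witnesses n"
      using x set_subst_tuple[of \<alpha> n x] \<alpha> by (auto simp: tuples_def)
    hence "(k, x, sb L n k \<alpha> r) \<in> atoms" "(n, subst_tuple n \<alpha> x, r) \<in> atoms"
      using x \<alpha> r by (auto simp: atoms_def)
    thus ?thesis
      using y asserted_if_derivable[OF _ _ derivable_subst(1)[OF \<alpha> x r]]
        asserted_if_derivable[OF _ _ derivable_subst(2)[OF \<alpha> x r]]
      by auto
  qed
  thus ?thesis by (auto simp: val_def subst_rel_def)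
qed

lemma val_ex:
  assumes r: "r \<in> car L (Suc n)"
  shows "ex_rel witnesses n (val (Suc n) r) \<subseteq> val n (ex L n r)"
proof
  fix xs assume "xs \<in> ex_rel witnesses n (val (Suc n) r)"
  then obtain y where xs: "xs \<in> tuples witnesses n" and "xs @ [y] \<in> val (Suc n) r"
    by (auto simp: ex_rel_def)
  moreover have "val (Suc n) r \<subseteq> val (Suc n) (sb L n (Suc n) (cyl n) (ex L n r))"
    using ax8 r cyl_substs by (intro val_mono) (auto simp: ax8_def)
  ultimately have "subst_tuple n (cyl n) (xs @ [y]) \<in> val n (ex L n r)"
    using val_sb[OF cyl_substs ex_car[OF r]] by (auto simp: subst_rel_def)
  moreover have "length xs = n" using xs by (simp add: tuples_def)
  ultimately show "xs \<in> val n (ex L n r)" by (simp add: subst_tuple_cyl)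
qed

lemma val_separates:
  assumes "r \<in> car L n" "s \<in> car L n" "\<not> le L n r s"
  shows "val n r \<noteq> val n s"
proof -
  define p where "p = (n, r, s)"
  have p: "p \<in> gaps" using assms by (simp add: p_def gaps_def)
  have "left_atom p = (n, witness_block p, r)" "right_atom p = (n, witness_block p, s)"
    by (simp_all add: left_atom_def right_atom_def p_def del: witness_block.simps)
  moreover have "Inl (left_atom p) \<in> X" "Inr (right_atom p) \<in> X" "right_atom p \<in> atoms"
    using p gap_theory_subset gap_atoms by (auto simp: gap_theory_def)
  ultimately have asserted: "Inl (n, witness_block p, r) \<in> X"
    and denied: "Inr (n, witness_block p, s) \<in> X"
    and atom: "(n, witness_block p, s) \<in> atoms"
    by simp_all
  have "witness_block p \<in> val n r" using asserted atom by (simp add: val_def atoms_def)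
  moreover have "Inl (n, witness_block p, s) \<notin> X"
    using consistent derivable_refl[OF atom] denied unfolding sequent_consistent_def by fastforce
  hence "witness_block p \<notin> val n s" by (simp add: val_def)
  ultimately show ?thesis by blast
qed

lemma inj_on_val: "inj_on (val n) (car L n)"
proof (rule inj_onI)
  fix r s assume "r \<in> car L n" "s \<in> car L n" "val n r = val n s"
  thus "r = s" using val_separates le_antisym by metis
qed

lemma val_subset: "val n r \<subseteq> tuples witnesses n"
  by (auto simp: val_def)

lemma almost_morphism_val: "almost_morphism L witnesses val"
  unfolding almost_morphism_def
  by (simp add: val_subset val_one val_zer val_jn val_mt val_sb val_ex)

end

theorem lemma4p10:
  fixes L :: "('a, 'b) pe_alg_scheme"
  assumes "pe_algebra L"
    and "ax0 L" and "ax1 L" and "ax2 L" and "ax3 L" and "ax4 L" and "ax8 L"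
  shows "\<exists>(W :: (nat \<times> 'a) set set set) (\<phi> :: nat \<Rightarrow> 'a \<Rightarrow> (nat \<times> 'a) set set list set).
           almost_morphism L W \<phi> \<and> (\<forall>n. inj_on (\<phi> n) (car L n))"
proof -
  interpret positive_existential L
    using assms by (simp add: positive_existential_def)
  obtain X where "gap_theory \<subseteq> X" "sequent_consistent derivable X" "\<forall>t\<in>atoms. Inl t \<in> X \<or> Inr t \<in> X"
    using lindenbaum[OF gap_theory_atoms gap_theory_consistent] by blast
  then interpret complete_gap_theory L X
    by unfold_locales
  show ?thesis using almost_morphism_val inj_on_val by blast
qed

end
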